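(* Let $G$ be a connected non-complete graph. The following statements are equivalent. (i) $\mu_t(G)=n(G)-\gamma_c(G)$. (ii) There exists a connected dominating set $S$ of $G$ with $|S|=\gamma_c(G)$ such that for every pair $u,v$ of vertices of $G$ there exists a shortest $u,v$-path $u=y_0,y_1,\dots,y_{k'}=v$ with $\{y_1,\dots,y_{k'-1}\}\subseteq S$.
   Context: All graphs are finite, simple and undirected; $n(G)$ denotes the order of $G$. A connected dominating set of $G$ is a dominating set $D$ such that $G[D]$ is connected; the connected domination number $\gamma_c(G)$ is the minimum cardinality of a connected dominating set. Let $G$ be a connected graph and $X\subseteq V(G)$. Two vertices $x,y\in V(G)$ are $X$-visible if there exists a shortest $x,y$-path in $G$ none of whose internal vertices (i.e., vertices other than $x$ and $y$) belongs to $X$. The set $X$ is a total mutual-visibility set of $G$ if every two vertices of $G$ are $X$-visible (the empty set is allowed). The total mutual-visibility number $\mu_t(G)$ is the maximum cardinality of a total mutual-visibility set of $G$. *)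

theory Defs
  imports Main
begin

definition graph :: "'a set \<Rightarrow> ('a \<Rightarrow> 'a \<Rightarrow> bool) \<Rightarrow> bool" where
  "graph V E \<longleftrightarrow> finite V \<and> (\<forall>x y. E x y \<longrightarrow> x \<in> V \<and> y \<in> V) \<and>
     (\<forall>x y. E x y \<longrightarrow> E y x) \<and> (\<forall>x. \<not> E x x)"

definition walk :: "'a set \<Rightarrow> ('a \<Rightarrow> 'a \<Rightarrow> bool) \<Rightarrow> 'a list \<Rightarrow> bool" where
  "walk V E p \<longleftrightarrow> p \<noteq> [] \<and> set p \<subseteq> V \<and> (\<forall>i. Suc i < length p \<longrightarrow> E (p ! i) (p ! Suc i))"

definition walk_betw :: "'a set \<Rightarrow> ('a \<Rightarrow> 'a \<Rightarrow> bool) \<Rightarrow> 'a \<Rightarrow> 'a \<Rightarrow> 'a list \<Rightarrow> bool" where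
  "walk_betw V E x y p \<longleftrightarrow> walk V E p \<and> hd p = x \<and> last p = y"

definition shortest_path :: "'a set \<Rightarrow> ('a \<Rightarrow> 'a \<Rightarrow> bool) \<Rightarrow> 'a \<Rightarrow> 'a \<Rightarrow> 'a list \<Rightarrow> bool" where
  "shortest_path V E x y p \<longleftrightarrow> walk_betw V E x y p \<and>
     (\<forall>q. walk_betw V E x y q \<longrightarrow> length p \<le> length q)"

definition internal :: "'a list \<Rightarrow> 'a set" where
  "internal p = set (butlast (tl p))"

definition connected_graph :: "'a set \<Rightarrow> ('a \<Rightarrow> 'a \<Rightarrow> bool) \<Rightarrow> bool" where
  "connected_graph V E \<longleftrightarrow> (\<forall>x\<in>V. \<forall>y\<in>V. \<exists>p. walk_betw V E x y p)"

definition complete_graph :: "'a set \<Rightarrow> ('a \<Rightarrow> 'a \<Rightarrow> bool) \<Rightarrow> bool" where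
  "complete_graph V E \<longleftrightarrow> (\<forall>x\<in>V. \<forall>y\<in>V. x \<noteq> y \<longrightarrow> E x y)"

definition dominating_set :: "'a set \<Rightarrow> ('a \<Rightarrow> 'a \<Rightarrow> bool) \<Rightarrow> 'a set \<Rightarrow> bool" where
  "dominating_set V E D \<longleftrightarrow> D \<subseteq> V \<and> (\<forall>v\<in>V. v \<in> D \<or> (\<exists>u\<in>D. E u v))"

text \<open>G[D] connected: walks inside D (induced subgraph).\<close>
definition connected_dominating_set :: "'a set \<Rightarrow> ('a \<Rightarrow> 'a \<Rightarrow> bool) \<Rightarrow> 'a set \<Rightarrow> bool" where
  "connected_dominating_set V E D \<longleftrightarrow> dominating_set V E D \<and> connected_graph D E"

definition connected_domination_number :: "'a set \<Rightarrow> ('a \<Rightarrow> 'a \<Rightarrow> bool) \<Rightarrow> nat" where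
  "connected_domination_number V E = Min (card ` {D. connected_dominating_set V E D})"

definition visible :: "'a set \<Rightarrow> ('a \<Rightarrow> 'a \<Rightarrow> bool) \<Rightarrow> 'a set \<Rightarrow> 'a \<Rightarrow> 'a \<Rightarrow> bool" where
  "visible V E X x y \<longleftrightarrow> (\<exists>p. shortest_path V E x y p \<and> internal p \<inter> X = {})"

definition total_mutual_visibility_set :: "'a set \<Rightarrow> ('a \<Rightarrow> 'a \<Rightarrow> bool) \<Rightarrow> 'a set \<Rightarrow> bool" where
  "total_mutual_visibility_set V E X \<longleftrightarrow> X \<subseteq> V \<and> (\<forall>x\<in>V. \<forall>y\<in>V. visible V E X x y)"

definition total_mutual_visibility_number :: "'a set \<Rightarrow> ('a \<Rightarrow> 'a \<Rightarrow> bool) \<Rightarrow> nat" where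
  "total_mutual_visibility_number V E = Max (card ` {X. total_mutual_visibility_set V E X})"

end

theory Submission
  imports Defs
begin

text \<open>If X is a total mutual-visibility set of a connected non-complete graph, then V - X is a
connected dominating set: shortest paths with interior outside X connect any two vertices of
V - X inside V - X, and every vertex gets a neighbour in V - X from the first interior vertex of
a shortest path to some non-neighbour. Hence \<mu>_t + \<gamma>_c \<le> n. Equality holds exactly when a
minimum connected dominating set S is the complement of a total mutual-visibility set, and
V - S is such a set precisely when every pair of vertices has a shortest path with interior in S.\<close>

lemma shortest_path_exists:
  assumes "connected_graph V E" "x \<in> V" "y \<in> V"
  shows "\<exists>p. shortest_path V E x y p"
proof -
  from assms obtain p where "walk_betw V E x y p"
    by (auto simp: connected_graph_def)
  from ex_has_least_nat[of "walk_betw V E x y" p length, OF this] show ?thesis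
    by (auto simp: shortest_path_def)
qed

lemma internal_subset_set: "internal p \<subseteq> set p"
  unfolding internal_def by (cases p) (auto dest: in_set_butlastD)

lemma set_subset_ends_internal: "p \<noteq> [] \<Longrightarrow> set p \<subseteq> {hd p, last p} \<union> internal p"
proof (induction p rule: rev_induct)
  case (snoc x xs)
  then show ?case by (cases xs) (auto simp: internal_def)
qed simp

lemma walk_betw_nonadjacent_internal_neighbour:
  assumes w: "walk_betw V E a b p" and "a \<noteq> b" and "\<not> E a b"
  shows "\<exists>d\<in>internal p. d \<in> V \<and> E a d"
proof -
  have edges: "\<And>i. Suc i < length p \<Longrightarrow> E (p ! i) (p ! Suc i)" and "set p \<subseteq> V"
    and ends: "p \<noteq> []" "hd p = a" "last p = b"
    using w by (auto simp: walk_betw_def walk_def)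
  obtain d q where p: "p = a # d # q"
    using ends \<open>a \<noteq> b\<close> by (cases p rule: remdups_adj.cases) auto
  have "q \<noteq> []"
    using edges[of 0] p ends \<open>\<not> E a b\<close> by auto
  then have "d \<in> internal p"
    using p by (simp add: internal_def)
  moreover have "E a d" using edges[of 0] p by simp
  ultimately show ?thesis using p \<open>set p \<subseteq> V\<close> by auto
qed

lemma total_mutual_visibility_set_complement_iff:
  assumes "S \<subseteq> V"
  shows "total_mutual_visibility_set V E (V - S) \<longleftrightarrow>
    (\<forall>u\<in>V. \<forall>v\<in>V. \<exists>p. shortest_path V E u v p \<and> internal p \<subseteq> S)"
proof -
  have "internal p \<inter> (V - S) = {} \<longleftrightarrow> internal p \<subseteq> S" if "shortest_path V E u v p" for u v p
  proof -
    have "internal p \<subseteq> V"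
      using that internal_subset_set[of p] by (auto simp: shortest_path_def walk_betw_def walk_def)
    then show ?thesis using assms by blast
  qed
  then show ?thesis
    unfolding total_mutual_visibility_set_def visible_def by blast
qed

lemma dominating_set_complement_total_mutual_visibility_set:
  assumes sym: "\<And>x y. E x y \<Longrightarrow> E y x" and "\<not> complete_graph V E"
    and X: "total_mutual_visibility_set V E X"
  shows "dominating_set V E (V - X)"
  unfolding dominating_set_def
proof (intro conjI ballI)
  have vis: "\<And>x y. x \<in> V \<Longrightarrow> y \<in> V \<Longrightarrow> \<exists>p. shortest_path V E x y p \<and> internal p \<inter> X = {}"
    using X by (auto simp: total_mutual_visibility_set_def visible_def)
  have neighbour_outside_X:
    "\<exists>d\<in>V - X. E a d" if ab: "a \<in> V" "b \<in> V" "a \<noteq> b" "\<not> E a b" for a b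
  proof -
    obtain p where p: "shortest_path V E a b p" "internal p \<inter> X = {}"
      using vis ab(1,2) by blast
    then show ?thesis
      using walk_betw_nonadjacent_internal_neighbour[of V E a b p] ab
      by (fastforce simp: shortest_path_def)
  qed
  fix v assume v: "v \<in> V"
  show "v \<in> V - X \<or> (\<exists>u\<in>V - X. E u v)"
  proof (cases "\<exists>y\<in>V. y \<noteq> v \<and> \<not> E v y")
    case True
    then show ?thesis using neighbour_outside_X[OF v] sym by blast
  next
    case False
    \<comment> \<open>v is universal, so it is adjacent to the neighbour outside X of any non-adjacent pair\<close>
    obtain a b where "a \<in> V" "b \<in> V" "a \<noteq> b" "\<not> E a b"
      using \<open>\<not> complete_graph V E\<close> by (auto simp: complete_graph_def)
    then obtain d where "d \<in> V - X" "E a d" using neighbour_outside_X by blast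
    then show ?thesis using False v sym by (cases "d = v") auto
  qed
qed auto

lemma connected_graph_complement_total_mutual_visibility_set:
  assumes X: "total_mutual_visibility_set V E X"
  shows "connected_graph (V - X) E"
  unfolding connected_graph_def
proof (intro ballI)
  fix u v assume u: "u \<in> V - X" and v: "v \<in> V - X"
  obtain p where p: "shortest_path V E u v p" "internal p \<inter> X = {}"
    using X u v unfolding total_mutual_visibility_set_def visible_def by blast
  then have w: "walk V E p" "hd p = u" "last p = v"
    by (auto simp: shortest_path_def walk_betw_def)
  then have "set p \<subseteq> V - X"
    using set_subset_ends_internal[of p] p u v by (auto simp: walk_def)
  then show "\<exists>p. walk_betw (V - X) E u v p"
    using w by (auto simp: walk_betw_def walk_def)
qed

lemma connected_dominating_set_complement_total_mutual_visibility_set: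
  assumes "graph V E" "\<not> complete_graph V E" "total_mutual_visibility_set V E X"
  shows "connected_dominating_set V E (V - X)"
  using assms dominating_set_complement_total_mutual_visibility_set
    connected_graph_complement_total_mutual_visibility_set
  by (auto simp: connected_dominating_set_def graph_def)

lemma connected_domination_number_le:
  assumes "finite V" "connected_dominating_set V E D"
  shows "connected_domination_number V E \<le> card D"
proof -
  have "finite {D. connected_dominating_set V E D}"
    by (rule finite_subset[of _ "Pow V"])
      (auto simp: assms(1) connected_dominating_set_def dominating_set_def)
  then show ?thesis
    unfolding connected_domination_number_def using assms(2) by (intro Min_le) auto
qed

lemma finite_total_mutual_visibility_sets:
  "finite V \<Longrightarrow> finite {X. total_mutual_visibility_set V E X}"
  by (rule finite_subset[of _ "Pow V"]) (auto simp: total_mutual_visibility_set_def)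

lemma card_le_total_mutual_visibility_number:
  assumes "finite V" "total_mutual_visibility_set V E X"
  shows "card X \<le> total_mutual_visibility_number V E"
  unfolding total_mutual_visibility_number_def
  using assms finite_total_mutual_visibility_sets by (intro Max_ge) auto

lemma total_mutual_visibility_number_attained:
  assumes "finite V" "connected_graph V E"
  obtains X where "total_mutual_visibility_set V E X"
    "card X = total_mutual_visibility_number V E"
proof -
  have "total_mutual_visibility_set V E {}"
    using shortest_path_exists[OF assms(2)]
    by (auto simp: total_mutual_visibility_set_def visible_def)
  then have "total_mutual_visibility_number V E \<in> card ` {X. total_mutual_visibility_set V E X}"
    unfolding total_mutual_visibility_number_def
    using assms(1) finite_total_mutual_visibility_sets by (intro Max_in) auto
  then show ?thesis using that by (auto simp: image_iff)
qed

lemma total_mutual_visibility_set_card_le: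
  assumes "graph V E" "\<not> complete_graph V E" "total_mutual_visibility_set V E X"
  shows "card X + connected_domination_number V E \<le> card V"
proof -
  have "finite V" "X \<subseteq> V"
    using assms by (auto simp: graph_def total_mutual_visibility_set_def)
  moreover have "connected_domination_number V E \<le> card (V - X)"
    using connected_domination_number_le connected_dominating_set_complement_total_mutual_visibility_set
      assms \<open>finite V\<close> by blast
  ultimately show ?thesis
    using card_mono[of V X] by (simp add: card_Diff_subset finite_subset)
qed

theorem proposition2p6:
  fixes V :: "'a set" and E :: "'a \<Rightarrow> 'a \<Rightarrow> bool"
  assumes "graph V E" and "connected_graph V E" and "\<not> complete_graph V E"
  shows "total_mutual_visibility_number V E = card V - connected_domination_number V E
     \<longleftrightarrow> (\<exists>S. connected_dominating_set V E S \<and> card S = connected_domination_number V E \<and>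
            (\<forall>u\<in>V. \<forall>v\<in>V. \<exists>p. shortest_path V E u v p \<and> internal p \<subseteq> S))"
proof -
  let ?\<gamma> = "connected_domination_number V E" and ?\<mu> = "total_mutual_visibility_number V E"
  have fin: "finite V" using assms(1) by (simp add: graph_def)
  obtain X where X: "total_mutual_visibility_set V E X" "card X = ?\<mu>"
    using total_mutual_visibility_number_attained[OF fin assms(2)] .
  have "X \<subseteq> V" using X(1) by (simp add: total_mutual_visibility_set_def)
  have bound: "?\<mu> + ?\<gamma> \<le> card V"
    using total_mutual_visibility_set_card_le[OF assms(1,3) X(1)] X(2) by simp
  show ?thesis
  proof
    assume eq: "?\<mu> = card V - ?\<gamma>"
    have cds: "connected_dominating_set V E (V - X)"
      using connected_dominating_set_complement_total_mutual_visibility_set[OF assms(1,3) X(1)] .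
    moreover have "card (V - X) = ?\<gamma>"
      using connected_domination_number_le[OF fin cds] eq X(2) \<open>X \<subseteq> V\<close> fin
      by (simp add: card_Diff_subset finite_subset)
    moreover have "V - (V - X) = X" using \<open>X \<subseteq> V\<close> by blast
    ultimately show "\<exists>S. connected_dominating_set V E S \<and> card S = ?\<gamma> \<and>
        (\<forall>u\<in>V. \<forall>v\<in>V. \<exists>p. shortest_path V E u v p \<and> internal p \<subseteq> S)"
      using total_mutual_visibility_set_complement_iff[of "V - X" V E] X(1) by auto
  next
    assume "\<exists>S. connected_dominating_set V E S \<and> card S = ?\<gamma> \<and>
        (\<forall>u\<in>V. \<forall>v\<in>V. \<exists>p. shortest_path V E u v p \<and> internal p \<subseteq> S)"
    then obtain S where S: "connected_dominating_set V E S" "card S = ?\<gamma>"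
      "\<forall>u\<in>V. \<forall>v\<in>V. \<exists>p. shortest_path V E u v p \<and> internal p \<subseteq> S" by blast
    have "S \<subseteq> V" using S(1) by (simp add: connected_dominating_set_def dominating_set_def)
    then have "card V - ?\<gamma> \<le> ?\<mu>"
      using card_le_total_mutual_visibility_number[OF fin, of E "V - S"] S
        total_mutual_visibility_set_complement_iff[of S V E] fin
      by (simp add: card_Diff_subset finite_subset)
    then show "?\<mu> = card V - ?\<gamma>" using bound by linarith
  qed
qed

end
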